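(* Let $S\ge 3$ and let $n_1,\dots,n_S$ be nonnegative integers. Write $E=E(n_1,\dots,n_S)$ and let $E(n_j\pm1)$ denote $E(n_1,\dots,n_S)$ with only the $j$-th argument replaced by $n_j\pm1$ (a value with a negative argument is $0$). Then $$2(n_2-n_1)E=(n_1+1)E(n_1+1)+n_1E(n_1-1)-(n_2+1)E(n_2+1)-n_2E(n_2-1),$$ $$(n_1+1)E(n_1+1)=n_2E(n_2-1)+\dots+n_SE(n_S-1)+(n_2+\dots+n_S-n_1)E.$$
   Context: For nonnegative integers $n_1,\dots,n_S$, $E(n_1,\dots,n_S)$ denotes the number of block derangements: $S$ players hold $n_1,\dots,n_S$ distinct cards respectively; all $N=n_1+\dots+n_S$ cards are redealt so that player $j$ again receives exactly $n_j$ cards (only which cards each player gets matters); $E$ counts the deals in which no player receives any card he originally held. Equivalently, $E(n_1,\dots,n_S)$ is the coefficient of $x_1^{n_1}\cdots x_S^{n_S}$ in $\prod_{j=1}^S(x_1+\dots+x_S-x_j)^{n_j}$. By convention $E(0,\dots,0)=1$. *)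

theory Defs
  imports "HOL-Library.FuncSet"
begin

(* Players are indexed 0..<S (player j+1 of the paper is index j).
   Player j originally holds the cards (j,k) for k < n j. *)
definition cards :: "nat \<Rightarrow> (nat \<Rightarrow> nat) \<Rightarrow> (nat \<times> nat) set" where
  "cards S n = {(j, k). j < S \<and> k < n j}"

definition block_deals :: "nat \<Rightarrow> (nat \<Rightarrow> nat) \<Rightarrow> ((nat \<times> nat) \<Rightarrow> nat) set" where
  "block_deals S n = {d \<in> cards S n \<rightarrow>\<^sub>E {..<S}.
      (\<forall>j<S. card {c \<in> cards S n. d c = j} = n j) \<and>
      (\<forall>c \<in> cards S n. d c \<noteq> fst c)}"

definition blockE :: "nat \<Rightarrow> (nat \<Rightarrow> nat) \<Rightarrow> nat" where
  "blockE S n = card (block_deals S n)"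

end

theory Submission
  imports Defs "HOL-Combinatorics.Permutations"
begin

text \<open>
  Count more generally the deranged deals \<open>D(h, r)\<close> in which player \<open>i\<close> holds \<open>h i\<close> cards and
  player \<open>j\<close> receives \<open>r j\<close> cards, so that \<open>E(n) = D(n, n)\<close>; let \<open>e i\<close> be the \<open>i\<close>-th unit vector.
  Sorting the deals by the player who gets one fixed card of player \<open>i\<close> gives
  \<open>D(h, r) = \<Sum>{D(h - e i, r - e j) | j \<noteq> i, r j > 0}\<close>; counting pairs (deal, card received by \<open>j\<close>),
  and using that all cards of a player are interchangeable, gives
  \<open>r j \<cdot> D(h, r) = \<Sum>{h i \<cdot> D(h - e i, r - e j) | i \<noteq> j}\<close>.
  Applying the second relation and then the first to \<open>E(n + e p)\<close> writes \<open>(n p + 1) \<cdot> E(n + e p)\<close>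
  as the double sum of \<open>n i \<cdot> D(n - e i, n - e k)\<close> over \<open>i, k \<noteq> p\<close>. Applying both relations to
  \<open>E(n)\<close> itself accounts for all terms with \<open>i \<noteq> k\<close>, and the diagonal is \<open>\<Sum>{n k \<cdot> E(n - e k) | k \<noteq> p}\<close>.
  This is the second identity, for every player \<open>p\<close>; subtracting it for two players gives the first.
\<close>

lemma card_filter_insert:
  assumes "finite A" "a \<notin> A"
  shows "card {x \<in> insert a A. P x} = card {x \<in> A. P x} + (if P a then 1 else 0)"
proof -
  have "{x \<in> insert a A. P x} = (if P a then insert a {x \<in> A. P x} else {x \<in> A. P x})"
    by auto
  then show ?thesis using assms by simp
qed

lemma card_eq_sum_card_fibres:
  assumes "finite A" "finite B" "f ` A \<subseteq> B"
  shows "card A = (\<Sum>y\<in>B. card {x \<in> A. f x = y})"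
  using sum_fun_comp[OF assms, of "\<lambda>_. 1 :: nat"] by simp

lemma sum_card_filter_swap:
  assumes "finite A" "finite B"
  shows "(\<Sum>x\<in>A. card {y \<in> B. P x y}) = (\<Sum>y\<in>B. card {x \<in> A. P x y})"
proof -
  have "(\<Sum>x\<in>A. card {y \<in> B. P x y}) = (\<Sum>x\<in>A. \<Sum>y\<in>B. if P x y then 1 else 0)"
    using assms(2) by (simp add: sum.inter_filter[symmetric])
  also have "\<dots> = (\<Sum>y\<in>B. \<Sum>x\<in>A. if P x y then 1 else 0)"
    by (rule sum.swap)
  also have "\<dots> = (\<Sum>y\<in>B. card {x \<in> A. P x y})"
    using assms(1) by (simp add: sum.inter_filter[symmetric])
  finally show ?thesis .
qed

definition deranged_deals :: "nat \<Rightarrow> (nat \<Rightarrow> nat) \<Rightarrow> (nat \<Rightarrow> nat) \<Rightarrow> ((nat \<times> nat) \<Rightarrow> nat) set" where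
  "deranged_deals S h r = {d \<in> cards S h \<rightarrow>\<^sub>E {..<S}.
      (\<forall>j<S. card {c \<in> cards S h. d c = j} = r j) \<and>
      (\<forall>c \<in> cards S h. d c \<noteq> fst c)}"

text \<open>For \<open>i \<noteq> j\<close> and \<open>h i > 0\<close> this counts the deals sending the last card of player \<open>i\<close>
  to player \<open>j\<close>; the guard matters because \<open>r j - 1\<close> truncates at \<open>0\<close>.\<close>

definition last_card_to :: "nat \<Rightarrow> (nat \<Rightarrow> nat) \<Rightarrow> (nat \<Rightarrow> nat) \<Rightarrow> nat \<Rightarrow> nat \<Rightarrow> nat" where
  "last_card_to S h r i j =
     (if r j = 0 then 0 else card (deranged_deals S (h(i := h i - 1)) (r(j := r j - 1))))"

lemma blockE_eq_card_deranged_deals: "blockE S n = card (deranged_deals S n n)"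
  by (simp add: blockE_def block_deals_def deranged_deals_def)

lemma cards_Sigma: "cards S h = Sigma {..<S} (\<lambda>i. {..<h i})"
  by (auto simp: cards_def)

lemma finite_cards [simp]: "finite (cards S h)"
  by (simp add: cards_Sigma)

lemma finite_deranged_deals [simp]: "finite (deranged_deals S h r)"
  by (rule finite_subset[of _ "cards S h \<rightarrow>\<^sub>E {..<S}"]) (auto simp: deranged_deals_def finite_PiE)

lemma cards_remove_last:
  assumes "i < S" "0 < h i"
  shows "cards S h = insert (i, h i - 1) (cards S (h(i := h i - 1)))"
  using assms by (auto simp: cards_def split: if_splits)

lemma last_notin_cards_remove_last [simp]: "(i, h i - 1) \<notin> cards S (h(i := h i - 1))"
  by (auto simp: cards_def)

lemma deranged_deals_card_to_owner:
  assumes "c \<in> cards S h"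
  shows "{d \<in> deranged_deals S h r. d c = fst c} = {}"
  using assms by (auto simp: deranged_deals_def)

lemma deranged_deals_remove_last_iff:
  assumes "i < S" "0 < h i" "j < S" "j \<noteq> i" "0 < r j" and dj: "d (i, h i - 1) = j"
  shows "d \<in> deranged_deals S h r \<longleftrightarrow>
    d((i, h i - 1) := undefined) \<in> deranged_deals S (h(i := h i - 1)) (r(j := r j - 1))"
proof -
  define c0 where "c0 = (i, h i - 1)"
  define C' where "C' = cards S (h(i := h i - 1))"
  define d' where "d' = d(c0 := undefined)"
  have C: "cards S h = insert c0 C'"
    unfolding c0_def C'_def using assms(1,2) by (rule cards_remove_last)
  have "c0 \<notin> C'"
    unfolding c0_def C'_def by (rule last_notin_cards_remove_last)
  have "d = d'(c0 := j)"
    using dj by (auto simp: d'_def c0_def fun_eq_iff)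
  then have funcset: "d \<in> cards S h \<rightarrow>\<^sub>E {..<S} \<longleftrightarrow> d' \<in> C' \<rightarrow>\<^sub>E {..<S}"
    using \<open>c0 \<notin> C'\<close> \<open>j < S\<close> unfolding C d'_def
    by (metis PiE_fun_upd fun_upd_in_PiE lessThan_iff)
  have "card {c \<in> cards S h. d c = k} = card {c \<in> C'. d' c = k} + (if j = k then 1 else 0)" for k
  proof -
    have "{c \<in> C'. d c = k} = {c \<in> C'. d' c = k}"
      using \<open>c0 \<notin> C'\<close> by (auto simp: d'_def)
    then show ?thesis
      unfolding C using card_filter_insert[OF _ \<open>c0 \<notin> C'\<close>] dj by (simp add: C'_def c0_def)
  qed
  then have receipts: "(\<forall>k<S. card {c \<in> cards S h. d c = k} = r k) \<longleftrightarrow>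
      (\<forall>k<S. card {c \<in> C'. d' c = k} = (r(j := r j - 1)) k)"
    using \<open>0 < r j\<close> by auto
  have deranged: "(\<forall>c \<in> cards S h. d c \<noteq> fst c) \<longleftrightarrow> (\<forall>c \<in> C'. d' c \<noteq> fst c)"
    using \<open>c0 \<notin> C'\<close> dj \<open>j \<noteq> i\<close> unfolding C by (auto simp: d'_def c0_def)
  show ?thesis
    using funcset receipts deranged by (simp add: deranged_deals_def C'_def d'_def c0_def)
qed

lemma card_deranged_deals_last_card_to:
  assumes "i < S" "0 < h i" "j < S" "j \<noteq> i"
  shows "card {d \<in> deranged_deals S h r. d (i, h i - 1) = j} = last_card_to S h r i j"
proof (cases "r j = 0")
  case True
  have "{d \<in> deranged_deals S h r. d (i, h i - 1) = j} = {}"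
  proof (rule equals0I)
    fix d assume "d \<in> {d \<in> deranged_deals S h r. d (i, h i - 1) = j}"
    then have d: "d \<in> deranged_deals S h r" "d (i, h i - 1) = j" by auto
    then have "(i, h i - 1) \<in> {c \<in> cards S h. d c = j}"
      using assms(1,2) by (simp add: cards_def)
    moreover have "card {c \<in> cards S h. d c = j} = 0"
      using d True \<open>j < S\<close> by (simp add: deranged_deals_def)
    ultimately show False by force
  qed
  then show ?thesis using True by (simp add: last_card_to_def)
next
  case False
  define c0 where "c0 = (i, h i - 1)"
  let ?A = "{d \<in> deranged_deals S h r. d c0 = j}"
  let ?B = "deranged_deals S (h(i := h i - 1)) (r(j := r j - 1))"
  have iff: "d \<in> deranged_deals S h r \<longleftrightarrow> d(c0 := undefined) \<in> ?B" if "d c0 = j" for d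
    using deranged_deals_remove_last_iff[of i S h j r d] assms False that
    unfolding c0_def by blast
  have undef: "d c0 = undefined" if "d \<in> ?B" for d
  proof -
    have "d \<in> cards S (h(i := h i - 1)) \<rightarrow>\<^sub>E {..<S}"
      using that by (simp add: deranged_deals_def)
    then show ?thesis
      unfolding c0_def by (rule PiE_arb) (rule last_notin_cards_remove_last)
  qed
  have "bij_betw (\<lambda>d. d(c0 := undefined)) ?A ?B"
  proof (rule bij_betw_byWitness[where f' = "\<lambda>d. d(c0 := j)"])
    show "\<forall>d\<in>?A. d(c0 := undefined, c0 := j) = d"
      by (auto simp: fun_upd_idem)
    show "\<forall>d\<in>?B. d(c0 := j, c0 := undefined) = d"
      using undef by (auto simp: fun_upd_idem)
    show "(\<lambda>d. d(c0 := undefined)) ` ?A \<subseteq> ?B"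
      using iff by auto
    show "(\<lambda>d. d(c0 := j)) ` ?B \<subseteq> ?A"
      using iff[of "d(c0 := j)" for d] undef by (auto simp: fun_upd_idem)
  qed
  then show ?thesis
    using False by (simp add: bij_betw_same_card last_card_to_def c0_def)
qed

lemma comp_permutes_deranged_deals:
  assumes \<sigma>: "\<sigma> permutes cards S h" and owner: "\<And>c. fst (\<sigma> c) = fst c"
    and d: "d \<in> deranged_deals S h r"
  shows "d \<circ> \<sigma> \<in> deranged_deals S h r"
proof -
  have funcset: "d \<in> cards S h \<rightarrow>\<^sub>E {..<S}"
    using d by (simp add: deranged_deals_def)
  have "d \<circ> \<sigma> \<in> cards S h \<rightarrow>\<^sub>E {..<S}"
  proof (rule PiE_I)
    show "(d \<circ> \<sigma>) c \<in> {..<S}" if "c \<in> cards S h" for c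
      using PiE_mem[OF funcset, of "\<sigma> c"] permutes_in_image[OF \<sigma>, of c] that by simp
    show "(d \<circ> \<sigma>) c = undefined" if "c \<notin> cards S h" for c
      using PiE_arb[OF funcset that] permutes_not_in[OF \<sigma> that] by simp
  qed
  moreover have "card {c \<in> cards S h. (d \<circ> \<sigma>) c = m} = r m" if "m < S" for m
  proof -
    have "\<sigma> ` {c \<in> cards S h. d (\<sigma> c) = m} = {c \<in> cards S h. d c = m}"
    proof (intro equalityI subsetI)
      fix c assume "c \<in> {c \<in> cards S h. d c = m}"
      moreover have "c = \<sigma> (inv \<sigma> c)"
        by (simp add: permutes_inverses(1)[OF \<sigma>])
      ultimately have "inv \<sigma> c \<in> {c \<in> cards S h. d (\<sigma> c) = m}"
        using permutes_in_image[OF \<sigma>, of "inv \<sigma> c"] by simp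
      with \<open>c = \<sigma> (inv \<sigma> c)\<close> show "c \<in> \<sigma> ` {c \<in> cards S h. d (\<sigma> c) = m}" by blast
    qed (use permutes_in_image[OF \<sigma>] in auto)
    moreover have "card (\<sigma> ` {c \<in> cards S h. d (\<sigma> c) = m}) = card {c \<in> cards S h. d (\<sigma> c) = m}"
      by (rule card_image[OF permutes_inj_on[OF \<sigma>]])
    ultimately show ?thesis
      using d that by (simp add: deranged_deals_def)
  qed
  moreover have "(d \<circ> \<sigma>) c \<noteq> fst c" if "c \<in> cards S h" for c
  proof -
    have "\<sigma> c \<in> cards S h"
      using permutes_in_image[OF \<sigma>] that by blast
    then have "d (\<sigma> c) \<noteq> fst (\<sigma> c)"
      using d by (simp add: deranged_deals_def)
    then show ?thesis
      using owner[of c] by simp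
  qed
  ultimately show ?thesis
    by (simp add: deranged_deals_def)
qed

lemma card_deranged_deals_card_to_eq:
  assumes "a \<in> cards S h" "b \<in> cards S h" "fst a = fst b"
  shows "card {d \<in> deranged_deals S h r. d a = j} = card {d \<in> deranged_deals S h r. d b = j}"
proof -
  let ?\<tau> = "transpose a b"
  have closed: "d \<circ> ?\<tau> \<in> deranged_deals S h r" if "d \<in> deranged_deals S h r" for d
    using comp_permutes_deranged_deals[OF permutes_swap_id[OF assms(1,2)] _ that] assms(3)
    by (simp add: transpose_def)
  have "bij_betw (\<lambda>d. d \<circ> ?\<tau>) {d \<in> deranged_deals S h r. d a = j} {d \<in> deranged_deals S h r. d b = j}"
  proof (rule bij_betw_byWitness[where f' = "\<lambda>d. d \<circ> ?\<tau>"])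
    show "\<forall>d\<in>{d \<in> deranged_deals S h r. d a = j}. d \<circ> ?\<tau> \<circ> ?\<tau> = d"
      and "\<forall>d\<in>{d \<in> deranged_deals S h r. d b = j}. d \<circ> ?\<tau> \<circ> ?\<tau> = d"
      by (simp_all add: comp_assoc)
  qed (auto simp: closed)
  then show ?thesis
    by (rule bij_betw_same_card)
qed

lemma card_deranged_deals_split_last_card:
  assumes "i < S" "0 < h i"
  shows "card (deranged_deals S h r) = (\<Sum>j\<in>{..<S}-{i}. last_card_to S h r i j)"
proof -
  let ?D = "deranged_deals S h r" and ?c = "(i, h i - 1)"
  have c: "?c \<in> cards S h"
    using assms by (simp add: cards_def)
  then have "(\<lambda>d. d ?c) ` ?D \<subseteq> {..<S}"
    by (auto simp: deranged_deals_def)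
  then have "card ?D = (\<Sum>j<S. card {d \<in> ?D. d ?c = j})"
    by (rule card_eq_sum_card_fibres[OF finite_deranged_deals finite_lessThan])
  also have "\<dots> = card {d \<in> ?D. d ?c = i} + (\<Sum>j\<in>{..<S}-{i}. card {d \<in> ?D. d ?c = j})"
    using assms(1) by (simp add: sum.remove)
  also have "\<dots> = (\<Sum>j\<in>{..<S}-{i}. last_card_to S h r i j)"
  proof -
    have "card {d \<in> ?D. d ?c = i} = 0"
      using deranged_deals_card_to_owner[OF c] by simp
    moreover have "card {d \<in> ?D. d ?c = j} = last_card_to S h r i j" if "j \<in> {..<S}-{i}" for j
      using card_deranged_deals_last_card_to[of i S h j r] assms that by simp
    ultimately show ?thesis
      by simp
  qed
  finally show ?thesis .
qed

lemma sum_cards_card_deranged_deals_card_to: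
  assumes "j < S"
  shows "(\<Sum>c\<in>cards S h. card {d \<in> deranged_deals S h r. d c = j}) =
    (\<Sum>i\<in>{..<S}-{j}. h i * last_card_to S h r i j)"
proof -
  let ?D = "deranged_deals S h r"
  define G where "G i = card {d \<in> ?D. d (i, h i - 1) = j}" for i
  have last: "card {d \<in> ?D. d (i, k) = j} = G i" if "i < S" "k < h i" for i k
    unfolding G_def by (rule card_deranged_deals_card_to_eq) (use that in \<open>auto simp: cards_def\<close>)
  have owner: "h j * G j = 0"
    using deranged_deals_card_to_owner[of "(j, h j - 1)" S h r] assms
    by (cases "h j = 0") (simp_all add: cards_def G_def)
  have others: "h i * G i = h i * last_card_to S h r i j" if "i \<in> {..<S}-{j}" for i
    using card_deranged_deals_last_card_to[of i S h j r] that assms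
    by (cases "h i = 0") (simp_all add: G_def)
  have "(\<Sum>c\<in>cards S h. card {d \<in> ?D. d c = j}) = (\<Sum>i<S. \<Sum>k<h i. card {d \<in> ?D. d (i, k) = j})"
    unfolding cards_Sigma by (subst sum.Sigma) auto
  also have "\<dots> = (\<Sum>i<S. h i * G i)"
    by (simp add: last)
  also have "\<dots> = h j * G j + (\<Sum>i\<in>{..<S}-{j}. h i * G i)"
    using assms by (simp add: sum.remove)
  also have "\<dots> = (\<Sum>i\<in>{..<S}-{j}. h i * G i)"
    by (simp add: owner)
  also have "\<dots> = (\<Sum>i\<in>{..<S}-{j}. h i * last_card_to S h r i j)"
    by (rule sum.cong[OF refl others])
  finally show ?thesis .
qed

lemma receipts_mult_card_deranged_deals:
  assumes "j < S"
  shows "r j * card (deranged_deals S h r) = (\<Sum>i\<in>{..<S}-{j}. h i * last_card_to S h r i j)"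
proof -
  let ?D = "deranged_deals S h r"
  have "r j * card ?D = (\<Sum>d\<in>?D. r j)"
    by simp
  also have "\<dots> = (\<Sum>d\<in>?D. card {c \<in> cards S h. d c = j})"
    by (rule sum.cong) (use assms in \<open>simp_all add: deranged_deals_def\<close>)
  also have "\<dots> = (\<Sum>c\<in>cards S h. card {d \<in> ?D. d c = j})"
    by (rule sum_card_filter_swap) simp_all
  also have "\<dots> = (\<Sum>i\<in>{..<S}-{j}. h i * last_card_to S h r i j)"
    by (rule sum_cards_card_deranged_deals_card_to[OF assms])
  finally show ?thesis .
qed

lemma last_card_to_add_card:
  assumes "p < S" "i \<noteq> p"
  shows "last_card_to S (n(p := n p + 1)) (n(p := n p + 1)) i p = (\<Sum>k\<in>{..<S}-{p}. last_card_to S n n i k)"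
proof -
  define h where "h = (n(i := n i - 1))(p := n p + 1)"
  have "last_card_to S (n(p := n p + 1)) (n(p := n p + 1)) i p = card (deranged_deals S h n)"
    using assms(2) by (simp add: last_card_to_def h_def fun_upd_twist)
  also have "\<dots> = (\<Sum>k\<in>{..<S}-{p}. last_card_to S h n p k)"
    by (rule card_deranged_deals_split_last_card) (simp_all add: assms(1) h_def)
  also have "\<dots> = (\<Sum>k\<in>{..<S}-{p}. last_card_to S n n i k)"
  proof -
    have "h(p := h p - 1) = n(i := n i - 1)"
      using assms(2) by (auto simp: h_def fun_eq_iff)
    then show ?thesis
      unfolding last_card_to_def by (simp only:)
  qed
  finally show ?thesis .
qed

lemma blockE_add_card:
  assumes "p < S"
  defines "I \<equiv> {..<S} - {p}"
  shows "(n p + 1) * blockE S (n(p := n p + 1)) + n p * blockE S n =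
    (\<Sum>k\<in>I. n k * blockE S (n(k := n k - 1))) + (\<Sum>k\<in>I. n k) * blockE S n"
proof -
  define E where "E = blockE S n"
  define T where "T i k = last_card_to S n n i k" for i k
  have "finite I" "p \<notin> I"
    by (simp_all add: I_def)
  have added: "(n p + 1) * blockE S (n(p := n p + 1)) = (\<Sum>i\<in>I. \<Sum>k\<in>I. n i * T i k)"
  proof -
    have "(n p + 1) * blockE S (n(p := n p + 1)) =
        (\<Sum>i\<in>I. n i * last_card_to S (n(p := n p + 1)) (n(p := n p + 1)) i p)"
      using receipts_mult_card_deranged_deals[OF assms(1), of "n(p := n p + 1)" "n(p := n p + 1)"]
      by (simp add: blockE_eq_card_deranged_deals I_def)
    then show ?thesis
      using last_card_to_add_card[OF assms(1)] by (simp add: I_def T_def sum_distrib_left)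
  qed
  have received: "n k * E = n p * T p k + (\<Sum>i\<in>I-{k}. n i * T i k)" if "k \<in> I" for k
  proof -
    have "{..<S} - {k} = insert p (I - {k})"
      using that assms(1) by (auto simp: I_def)
    then show ?thesis
      using receipts_mult_card_deranged_deals[of k S n n] that \<open>finite I\<close> \<open>p \<notin> I\<close>
      by (simp add: E_def T_def I_def blockE_eq_card_deranged_deals)
  qed
  have given: "n p * E = (\<Sum>k\<in>I. n p * T p k)"
    using card_deranged_deals_split_last_card[OF assms(1), of n n]
    by (cases "n p = 0") (simp_all add: E_def T_def I_def blockE_eq_card_deranged_deals sum_distrib_left)
  have diag: "(\<Sum>i\<in>I. n i * T i k) = n k * blockE S (n(k := n k - 1)) + (\<Sum>i\<in>I-{k}. n i * T i k)"
    if "k \<in> I" for k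
    using that \<open>finite I\<close>
    by (simp add: sum.remove T_def last_card_to_def blockE_eq_card_deranged_deals)
  have "(n p + 1) * blockE S (n(p := n p + 1)) + n p * E
      = (\<Sum>i\<in>I. \<Sum>k\<in>I. n i * T i k) + (\<Sum>k\<in>I. n p * T p k)"
    by (simp only: added given)
  also have "\<dots> = (\<Sum>k\<in>I. \<Sum>i\<in>I. n i * T i k) + (\<Sum>k\<in>I. n p * T p k)"
    by (subst sum.swap) (rule refl)
  also have "\<dots> = (\<Sum>k\<in>I. (\<Sum>i\<in>I. n i * T i k) + n p * T p k)"
    by (rule sum.distrib[symmetric])
  also have "\<dots> = (\<Sum>k\<in>I. n k * blockE S (n(k := n k - 1)) + n k * E)"
    by (rule sum.cong) (simp_all add: diag received)
  also have "\<dots> = (\<Sum>k\<in>I. n k * blockE S (n(k := n k - 1))) + (\<Sum>k\<in>I. n k) * E"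
    by (simp add: sum.distrib sum_distrib_right)
  finally show ?thesis
    by (simp add: E_def)
qed

lemma blockE_add_card_total:
  assumes "p < S"
  shows "(n p + 1) * blockE S (n(p := n p + 1)) + n p * blockE S (n(p := n p - 1)) + 2 * n p * blockE S n =
    (\<Sum>k<S. n k * blockE S (n(k := n k - 1))) + (\<Sum>k<S. n k) * blockE S n"
  using blockE_add_card[OF assms, of n] assms by (simp add: sum.remove algebra_simps)

lemma blockE_add_card_int:
  assumes "p < S"
  shows "int (n p + 1) * int (blockE S (n(p := n p + 1))) =
    (\<Sum>j\<in>{..<S}-{p}. int (n j) * int (blockE S (n(j := n j - 1))))
    + ((\<Sum>j\<in>{..<S}-{p}. int (n j)) - int (n p)) * int (blockE S n)"
  using arg_cong[OF blockE_add_card[OF assms, of n], of int]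
  by (simp add: algebra_simps flip: of_nat_add of_nat_mult of_nat_sum)

lemma blockE_two_players:
  assumes "p < S" "q < S"
  shows "2 * (int (n q) - int (n p)) * int (blockE S n) =
      int (n p + 1) * int (blockE S (n(p := n p + 1))) + int (n p) * int (blockE S (n(p := n p - 1)))
    - int (n q + 1) * int (blockE S (n(q := n q + 1))) - int (n q) * int (blockE S (n(q := n q - 1)))"
proof -
  have "(n p + 1) * blockE S (n(p := n p + 1)) + n p * blockE S (n(p := n p - 1)) + 2 * n p * blockE S n =
      (n q + 1) * blockE S (n(q := n q + 1)) + n q * blockE S (n(q := n q - 1)) + 2 * n q * blockE S n"
    unfolding blockE_add_card_total[OF assms(1)] blockE_add_card_total[OF assms(2)] ..
  from arg_cong[OF this, of int] show ?thesis
    unfolding of_nat_add of_nat_mult of_nat_numeral of_nat_1 by algebra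
qed

theorem mainTheorem8:
  fixes S :: nat and n :: "nat \<Rightarrow> nat"
  assumes "S \<ge> 3"
  shows "(2 * (int (n 1) - int (n 0)) * int (blockE S n) =
           int (n 0 + 1) * int (blockE S (n(0 := n 0 + 1)))
         + int (n 0) * int (blockE S (n(0 := n 0 - 1)))
         - int (n 1 + 1) * int (blockE S (n(1 := n 1 + 1)))
         - int (n 1) * int (blockE S (n(1 := n 1 - 1)))) \<and>
         (int (n 0 + 1) * int (blockE S (n(0 := n 0 + 1))) =
           (\<Sum>j\<in>{1..<S}. int (n j) * int (blockE S (n(j := n j - 1))))
         + ((\<Sum>j\<in>{1..<S}. int (n j)) - int (n 0)) * int (blockE S n))"
proof (rule conjI)
  have "0 < S" "1 < S"
    using assms by simp_all
  then show "2 * (int (n 1) - int (n 0)) * int (blockE S n) =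
           int (n 0 + 1) * int (blockE S (n(0 := n 0 + 1)))
         + int (n 0) * int (blockE S (n(0 := n 0 - 1)))
         - int (n 1 + 1) * int (blockE S (n(1 := n 1 + 1)))
         - int (n 1) * int (blockE S (n(1 := n 1 - 1)))"
    by (rule blockE_two_players)
  have "{..<S} - {0} = {1..<S}"
    by auto
  with blockE_add_card_int[OF \<open>0 < S\<close>, of n]
  show "int (n 0 + 1) * int (blockE S (n(0 := n 0 + 1))) =
           (\<Sum>j\<in>{1..<S}. int (n j) * int (blockE S (n(j := n j - 1))))
         + ((\<Sum>j\<in>{1..<S}. int (n j)) - int (n 0)) * int (blockE S n)"
    by simp
qed

end
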